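(* In the transactional panorama model with the lenses and metrics described in the context, $S(\mathrm{LCMB}) \le S(\mathrm{LCNB})$ and $S(\mathrm{ICNB}) \le S(\mathrm{LCNB})$, while the order between $S(\mathrm{LCMB})$ and $S(\mathrm{ICNB})$ depends on the workload (neither inequality between them holds for all workloads).
   Context: A view graph is a DAG on a set $N$ of nodes (source data and views). Write transactions are processed one at a time; write transaction $w^{t_i}$ creates version $G^{t_i}$ with state set $V^{t_i}$ containing, for each node $n_k$, either its computed new result $v_k^{t_i}$, a placeholder $UC_k^{t_i}$ if $w^{t_i}$ updates $n_k$ but has not yet computed it, or its result from the previous version if $n_k$ is not updated. A version is committed once all its new results are computed; at any time there is the committed graph (most recently committed version, no UCs) and the latest graph (version of the most recent write transaction). Read transactions $r^{s_1},\dots,r^{s_m}$ each read the views in the current viewport and return immediately a set $H^{s_i}$ of states (results or UCs); $Time(r^{s_i})$ is its return time. A returned state's timestamp is that of its version. Lenses: LCNB returns the viewport states from the more recent of the committed and latest graphs that has zero UCs for the viewport. LCMB: if reading either the committed or the latest graph preserves monotonicity (no view gets a state with smaller timestamp than previously read), behave like LCNB; otherwise read the latest graph. ICNB returns, for each view independently, its most recently computed result. Staleness for $R=\{r^{s_1},\dots,r^{s_m}\}$: $S(R)=\sum_{i=1}^{m-1}\sum_{v_k^{t_j}\in H^{s_i}_{qr}}\mathbf{1}[v_k^{t_j}\notin V^{t_i}]\,(Time(r^{s_{i+1}})-Time(r^{s_i}))$ where $H^{s_i}_{qr}$ is the set of view results (non-UC states) in $H^{s_i}$ and $G^{t_i}$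 is the latest version before $r^{s_i}$ starts. $S(A)$ denotes staleness under lens $A$; lenses are compared on the same write transactions, the same order of computing new view results, and the same sequence of read transactions. A workload consists of the view graph, viewports, and read/write transactions. *)

theory Defs
  imports Main "HOL.Real"
begin

text \<open>Version 0 is the
initial version (all results computed, timestamp 0); write transaction i (1 \<le> i \<le> nw)
starts at time wstart i, updates the nodes in upd i, and the new result of node k
for version i is computed at time ctime i k. Read transaction r (r < nr) happens
(and returns) at time rtime r and reads the views in viewport vport r.\<close>

record workload =
  nodes  :: "nat set"
  edges  :: "(nat \<times> nat) set"
  nw     :: nat
  wstart :: "nat \<Rightarrow> real"
  upd    :: "nat \<Rightarrow> nat set"
  ctime  :: "nat \<Rightarrow> nat \<Rightarrow> real"
  nr     :: nat
  rtime  :: "nat \<Rightarrow> real"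
  vport  :: "nat \<Rightarrow> nat set"

text \<open>Views: nodes of the DAG that are not source data (have an incoming edge).\<close>
definition views :: "workload \<Rightarrow> nat set" where
  "views w = {n \<in> nodes w. \<exists>m. (m, n) \<in> edges w}"

definition wf_workload :: "workload \<Rightarrow> bool" where
  "wf_workload w \<longleftrightarrow>
     finite (nodes w) \<and> edges w \<subseteq> nodes w \<times> nodes w \<and> acyclic (edges w) \<and>
     (\<forall>i\<in>{1..nw w}. upd w i \<subseteq> nodes w) \<and>
     (\<forall>i\<in>{1..nw w}. \<forall>j\<in>{1..nw w}. i < j \<longrightarrow> wstart w i < wstart w j) \<and>
     (\<forall>i\<in>{1..nw w}. \<forall>k\<in>upd w i. wstart w i \<le> ctime w i k) \<and>
     (\<forall>i<nr w. \<forall>j<nr w. i < j \<longrightarrow> rtime w i < rtime w j) \<and>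
     (\<forall>i<nr w. vport w i \<subseteq> views w)"

text \<open>States: Res k j is the result v_k^{t_j}, UC k j the placeholder UC_k^{t_j}.\<close>
datatype state = Res nat nat | UC nat nat

fun is_res :: "state \<Rightarrow> bool" where
  "is_res (Res _ _) = True" | "is_res (UC _ _) = False"

definition latest :: "workload \<Rightarrow> real \<Rightarrow> nat" where
  "latest w \<tau> = Max ({0} \<union> {i \<in> {1..nw w}. wstart w i \<le> \<tau>})"

text \<open>Version of the state of node k in G^{t_i}: the last write transaction up to i updating k.\<close>
definition lastupd :: "workload \<Rightarrow> nat \<Rightarrow> nat \<Rightarrow> nat" where
  "lastupd w k i = Max ({0} \<union> {j \<in> {1..min i (nw w)}. k \<in> upd w j})"

definition computed :: "workload \<Rightarrow> nat \<Rightarrow> nat \<Rightarrow> real \<Rightarrow> bool" where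
  "computed w j k \<tau> \<longleftrightarrow> j = 0 \<or> ctime w j k \<le> \<tau>"

definition state_in :: "workload \<Rightarrow> nat \<Rightarrow> nat \<Rightarrow> real \<Rightarrow> state" where
  "state_in w i k \<tau> = (let j = lastupd w k i in
      if computed w j k \<tau> then Res k j else UC k j)"

definition Vset :: "workload \<Rightarrow> nat \<Rightarrow> real \<Rightarrow> state set" where
  "Vset w i \<tau> = (\<lambda>k. state_in w i k \<tau>) ` nodes w"

definition no_uc :: "workload \<Rightarrow> nat \<Rightarrow> nat set \<Rightarrow> real \<Rightarrow> bool" where
  "no_uc w i S \<tau> \<longleftrightarrow> (\<forall>k\<in>S. computed w (lastupd w k i) k \<tau>)"

definition committed :: "workload \<Rightarrow> real \<Rightarrow> nat" where
  "committed w \<tau> = Max {i \<in> {0..latest w \<tau>}. no_uc w i (nodes w) \<tau>}"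

definition read_ver :: "workload \<Rightarrow> nat \<Rightarrow> nat set \<Rightarrow> real \<Rightarrow> state set" where
  "read_ver w i P \<tau> = (\<lambda>k. state_in w i k \<tau>) ` P"

definition lcnb_ver :: "workload \<Rightarrow> real \<Rightarrow> nat set \<Rightarrow> nat" where
  "lcnb_ver w \<tau> P = (if no_uc w (latest w \<tau>) P \<tau> then latest w \<tau> else committed w \<tau>)"

text \<open>LCMB, given the history h (maximal timestamp read so far for each view,
0 if never read; all timestamps are \<ge> 0).\<close>
definition lcmb_ver_h :: "workload \<Rightarrow> (nat \<Rightarrow> nat) \<Rightarrow> nat \<Rightarrow> nat" where
  "lcmb_ver_h w h r = (let \<tau> = rtime w r; P = vport w r;
      L = latest w \<tau>; C = committed w \<tau>;
      mono = (\<lambda>G. \<forall>k\<in>P. h k \<le> lastupd w k G)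
    in if mono C \<and> mono L then lcnb_ver w \<tau> P else L)"

primrec lcmb_hist :: "workload \<Rightarrow> nat \<Rightarrow> (nat \<Rightarrow> nat)" where
  "lcmb_hist w 0 = (\<lambda>k. 0)"
| "lcmb_hist w (Suc r) = (\<lambda>k. if k \<in> vport w r
       then max (lcmb_hist w r k) (lastupd w k (lcmb_ver_h w (lcmb_hist w r) r))
       else lcmb_hist w r k)"

definition lcmb_ver :: "workload \<Rightarrow> nat \<Rightarrow> nat" where
  "lcmb_ver w r = lcmb_ver_h w (lcmb_hist w r) r"

definition icnb_state :: "workload \<Rightarrow> nat \<Rightarrow> real \<Rightarrow> state" where
  "icnb_state w k \<tau> = Res k (Max ({0} \<union>
      {j \<in> {1..latest w \<tau>}. k \<in> upd w j \<and> ctime w j k \<le> \<tau>}))"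

datatype lens = LCNB | LCMB | ICNB

fun H :: "workload \<Rightarrow> lens \<Rightarrow> nat \<Rightarrow> state set" where
  "H w LCNB r = read_ver w (lcnb_ver w (rtime w r) (vport w r)) (vport w r) (rtime w r)"
| "H w LCMB r = read_ver w (lcmb_ver w r) (vport w r) (rtime w r)"
| "H w ICNB r = (\<lambda>k. icnb_state w k (rtime w r)) ` vport w r"

definition staleness :: "workload \<Rightarrow> lens \<Rightarrow> real" where
  "staleness w A = (\<Sum>i\<in>{..<nr w - 1}.
      (\<Sum>s\<in>{s \<in> H w A i. is_res s}.
          (if s \<notin> Vset w (latest w (rtime w i)) (rtime w i) then 1 else 0))
      * (rtime w (Suc i) - rtime w i))"

end

theory Submission
  imports Defs
begin

text \<open>Compare the lenses read by read, counting the stale results of each read; since read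
  times increase, staleness is monotone in these counts. LCMB either behaves like LCNB or reads
  the latest graph, which never yields a stale result. ICNB can only be stale on
  \<^emph>\<open>pending\<close> views, whose state in the latest graph is still a UC; if there is one, LCNB
  reads the committed graph instead, and its results for the pending views are computed results
  absent from the latest graph, hence at least as many stale results as ICNB has. Two small
  workloads separate LCMB and ICNB in both directions.\<close>

fun state_node :: "state \<Rightarrow> nat" where
  "state_node (Res k _) = k" | "state_node (UC k _) = k"

lemma state_node_state_in [simp]: "state_node (state_in w i k \<tau>) = k"
  by (simp add: state_in_def Let_def)

lemma inj_state_in: "inj (\<lambda>k. state_in w i k \<tau>)"
  by (rule injI) (metis state_node_state_in)

lemma lastupd_0 [simp]: "lastupd w k 0 = 0"
  by (simp add: lastupd_def)

lemma latest_le_nw: "latest w \<tau> \<le> nw w"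
  unfolding latest_def by (rule Max.boundedI) auto

lemma committed_no_uc: "no_uc w (committed w \<tau>) (nodes w) \<tau>"
proof -
  have "committed w \<tau> \<in> {i \<in> {0..latest w \<tau>}. no_uc w i (nodes w) \<tau>}"
    unfolding committed_def
    by (rule Max_in) (auto simp: no_uc_def computed_def intro!: exI[of _ 0])
  thus ?thesis by simp
qed

lemma state_in_committed:
  "k \<in> nodes w \<Longrightarrow> state_in w (committed w \<tau>) k \<tau> = Res k (lastupd w k (committed w \<tau>))"
  using committed_no_uc[of w \<tau>] by (simp add: no_uc_def state_in_def)

lemma state_in_eq_if_Res_in_Vset:
  assumes "Res k j \<in> Vset w i \<tau>"
  shows "state_in w i k \<tau> = Res k j"
proof -
  obtain k' where k': "state_in w i k' \<tau> = Res k j"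
    using assms unfolding Vset_def by auto
  hence "k' = k"
    using state_node_state_in[of w i k' \<tau>] by simp
  with k' show ?thesis by simp
qed

lemma read_ver_subset_Vset: "P \<subseteq> nodes w \<Longrightarrow> read_ver w i P \<tau> \<subseteq> Vset w i \<tau>"
  unfolding read_ver_def Vset_def by auto

lemma finite_H: "finite (vport w i) \<Longrightarrow> finite (H w A i)"
  by (cases A) (simp_all add: read_ver_def)

lemma vport_subset_nodes: "wf_workload w \<Longrightarrow> i < nr w \<Longrightarrow> vport w i \<subseteq> nodes w"
  unfolding wf_workload_def views_def by blast

lemma finite_vport:
  assumes "wf_workload w" "i < nr w"
  shows "finite (vport w i)"
  using finite_subset[OF vport_subset_nodes[OF assms]] assms(1) by (simp add: wf_workload_def)

lemma icnb_state_eq_state_in_latest: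
  assumes "computed w (lastupd w k (latest w \<tau>)) k \<tau>"
  shows "icnb_state w k \<tau> = state_in w (latest w \<tau>) k \<tau>"
proof -
  let ?L = "latest w \<tau>"
  let ?U = "{0} \<union> {j \<in> {1..?L}. k \<in> upd w j}"
  let ?C = "{0} \<union> {j \<in> {1..?L}. k \<in> upd w j \<and> ctime w j k \<le> \<tau>}"
  define m where "m = lastupd w k ?L"
  have m_eq: "m = Max ?U"
    using latest_le_nw[of w \<tau>] by (simp add: m_def lastupd_def min_absorb1)
  have "m \<in> ?U"
    unfolding m_eq by (rule Max_in) auto
  hence "m \<in> ?C"
    using assms by (auto simp: m_def[symmetric] computed_def)
  have "Max ?C = m"
  proof (rule Max_eqI)
    show "finite ?C" by auto
    show "m \<in> ?C" by fact
    fix y assume "y \<in> ?C"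
    hence "y \<in> ?U" by auto
    thus "y \<le> m" unfolding m_eq by (rule Max_ge[rotated]) auto
  qed
  hence "icnb_state w k \<tau> = Res k m"
    unfolding icnb_state_def by (rule arg_cong)
  also have "\<dots> = state_in w ?L k \<tau>"
    using assms by (simp add: state_in_def m_def)
  finally show ?thesis .
qed

definition stale_results :: "workload \<Rightarrow> lens \<Rightarrow> nat \<Rightarrow> state set" where
  "stale_results w A i =
     {s \<in> H w A i. is_res s \<and> s \<notin> Vset w (latest w (rtime w i)) (rtime w i)}"

lemma finite_stale_results:
  assumes "wf_workload w" "i < nr w"
  shows "finite (stale_results w A i)"
proof (rule finite_subset)
  show "stale_results w A i \<subseteq> H w A i"
    unfolding stale_results_def by blast
  show "finite (H w A i)"
    by (rule finite_H[OF finite_vport[OF assms]])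
qed

lemma staleness_eq_sum_card_stale_results:
  assumes "wf_workload w"
  shows "staleness w A =
    (\<Sum>i<nr w - 1. real (card (stale_results w A i)) * (rtime w (Suc i) - rtime w i))"
  unfolding staleness_def
proof (rule sum.cong)
  fix i assume "i \<in> {..<nr w - 1}"
  hence "finite {s \<in> H w A i. is_res s}"
    using finite_H[OF finite_vport[OF assms]] by simp
  thus "(\<Sum>s\<in>{s \<in> H w A i. is_res s}.
          if s \<notin> Vset w (latest w (rtime w i)) (rtime w i) then 1 else 0)
        * (rtime w (Suc i) - rtime w i)
      = real (card (stale_results w A i)) * (rtime w (Suc i) - rtime w i)"
    by (simp add: of_bool_def[symmetric] stale_results_def Int_def conj_assoc)
qed simp

lemma staleness_mono:
  assumes "wf_workload w"
    and "\<And>i. i < nr w \<Longrightarrow> card (stale_results w A i) \<le> card (stale_results w B i)"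
  shows "staleness w A \<le> staleness w B"
  unfolding staleness_eq_sum_card_stale_results[OF assms(1)]
proof (rule sum_mono)
  fix i assume "i \<in> {..<nr w - 1}"
  hence "i < nr w" and "rtime w i < rtime w (Suc i)"
    using assms(1) unfolding wf_workload_def by auto
  thus "real (card (stale_results w A i)) * (rtime w (Suc i) - rtime w i)
      \<le> real (card (stale_results w B i)) * (rtime w (Suc i) - rtime w i)"
    using assms(2) by (simp add: mult_right_mono)
qed

lemma stale_results_empty_if_reads_latest:
  "H w A i \<subseteq> Vset w (latest w (rtime w i)) (rtime w i) \<Longrightarrow> stale_results w A i = {}"
  unfolding stale_results_def by blast

lemma lcmb_ver_cases:
  "lcmb_ver w i = lcnb_ver w (rtime w i) (vport w i) \<or> lcmb_ver w i = latest w (rtime w i)"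
  unfolding lcmb_ver_def lcmb_ver_h_def by (simp add: Let_def)

lemma card_stale_results_LCMB_le_LCNB:
  assumes "wf_workload w" "i < nr w"
  shows "card (stale_results w LCMB i) \<le> card (stale_results w LCNB i)"
  using lcmb_ver_cases[of w i]
proof
  assume "lcmb_ver w i = lcnb_ver w (rtime w i) (vport w i)"
  thus ?thesis by (simp add: stale_results_def)
next
  assume "lcmb_ver w i = latest w (rtime w i)"
  hence "stale_results w LCMB i = {}"
    using read_ver_subset_Vset[OF vport_subset_nodes[OF assms]]
    by (intro stale_results_empty_if_reads_latest) simp
  thus ?thesis by simp
qed

definition pending_views :: "workload \<Rightarrow> nat \<Rightarrow> nat set" where
  "pending_views w i = {k \<in> vport w i.
     \<not> computed w (lastupd w k (latest w (rtime w i))) k (rtime w i)}"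

lemma stale_results_ICNB_subset:
  assumes "wf_workload w" "i < nr w"
  shows "stale_results w ICNB i \<subseteq> (\<lambda>k. icnb_state w k (rtime w i)) ` pending_views w i"
proof
  fix s assume s: "s \<in> stale_results w ICNB i"
  then obtain k where k: "k \<in> vport w i" "s = icnb_state w k (rtime w i)"
    by (auto simp: stale_results_def)
  have "k \<in> pending_views w i"
  proof (rule ccontr)
    assume "k \<notin> pending_views w i"
    hence "s = state_in w (latest w (rtime w i)) k (rtime w i)"
      using k by (simp add: pending_views_def icnb_state_eq_state_in_latest)
    hence "s \<in> Vset w (latest w (rtime w i)) (rtime w i)"
      using k vport_subset_nodes[OF assms] by (auto simp: Vset_def)
    thus False
      using s by (simp add: stale_results_def)
  qed
  thus "s \<in> (\<lambda>k. icnb_state w k (rtime w i)) ` pending_views w i"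
    using k by blast
qed

lemma committed_results_stale_for_LCNB:
  assumes "wf_workload w" "i < nr w" "pending_views w i \<noteq> {}"
  shows "(\<lambda>k. state_in w (committed w (rtime w i)) k (rtime w i)) ` pending_views w i
           \<subseteq> stale_results w LCNB i"
proof
  let ?\<tau> = "rtime w i" and ?C = "committed w (rtime w i)" and ?L = "latest w (rtime w i)"
  have H_LCNB: "H w LCNB i = read_ver w ?C (vport w i) ?\<tau>"
    using assms(3) by (auto simp: lcnb_ver_def no_uc_def pending_views_def)
  fix s assume "s \<in> (\<lambda>k. state_in w ?C k ?\<tau>) ` pending_views w i"
  then obtain k where k: "k \<in> pending_views w i" "s = state_in w ?C k ?\<tau>"
    by blast
  have k_vport: "k \<in> vport w i"
    using k(1) by (simp add: pending_views_def)
  have s_Res: "s = Res k (lastupd w k ?C)"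
    using k(2) k_vport vport_subset_nodes[OF assms(1,2)] state_in_committed by auto
  have "s \<notin> Vset w ?L ?\<tau>"
  proof
    assume "s \<in> Vset w ?L ?\<tau>"
    hence "state_in w ?L k ?\<tau> = s"
      using s_Res state_in_eq_if_Res_in_Vset by simp
    hence "computed w (lastupd w k ?L) k ?\<tau>"
      using s_Res by (simp add: state_in_def Let_def split: if_splits)
    thus False
      using k(1) by (simp add: pending_views_def)
  qed
  moreover have "s \<in> H w LCNB i"
    unfolding H_LCNB read_ver_def using k(2) k_vport by blast
  ultimately show "s \<in> stale_results w LCNB i"
    unfolding stale_results_def using s_Res by simp
qed

lemma card_stale_results_ICNB_le_LCNB:
  assumes "wf_workload w" "i < nr w"
  shows "card (stale_results w ICNB i) \<le> card (stale_results w LCNB i)"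
proof -
  have fin_pending: "finite (pending_views w i)"
    using finite_vport[OF assms] by (simp add: pending_views_def)
  have "card (stale_results w ICNB i) \<le> card ((\<lambda>k. icnb_state w k (rtime w i)) ` pending_views w i)"
    by (rule card_mono[OF finite_imageI[OF fin_pending] stale_results_ICNB_subset[OF assms]])
  also have "\<dots> \<le> card (pending_views w i)"
    by (rule card_image_le[OF fin_pending])
  also have "\<dots> \<le> card (stale_results w LCNB i)"
  proof (cases "pending_views w i = {}")
    case False
    thus ?thesis
      using card_mono[OF finite_stale_results[OF assms] committed_results_stale_for_LCNB[OF assms False]]
      by (simp add: card_image inj_on_subset[OF inj_state_in])
  qed simp
  finally show ?thesis .
qed

text \<open>A single write updates both viewport views but has computed only view 2 when the first
  read happens. LCMB and LCNB fall back to the initial version and return two stale results;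
  ICNB returns the new result of view 2 and only one stale result.\<close>

definition lcmb_staler_workload :: workload where
  "lcmb_staler_workload = \<lparr>nodes = {0, 1, 2}, edges = {(0, 1), (0, 2)},
     nw = 1, wstart = (\<lambda>_. 1), upd = (\<lambda>_. {1, 2}),
     ctime = (\<lambda>_ k. if k = 2 then 1 else 3),
     nr = 2, rtime = (\<lambda>r. real r + 2), vport = (\<lambda>_. {1, 2})\<rparr>"

lemma wf_lcmb_staler_workload: "wf_workload lcmb_staler_workload"
proof -
  have "acyclic {(0::nat, 1), (0, 2)}"
    by (rule acyclic_subset[OF wf_acyclic[OF wf_less_than]]) auto
  thus ?thesis
    by (auto simp: wf_workload_def views_def lcmb_staler_workload_def)
qed

lemma staleness_ICNB_less_LCMB:
  "staleness lcmb_staler_workload ICNB < staleness lcmb_staler_workload LCMB"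
proof -
  let ?W = lcmb_staler_workload
  have [simp]: "nodes ?W = {0, 1, 2}" "nw ?W = 1" "wstart ?W i = 1" "upd ?W i = {1, 2}"
    "ctime ?W i k = (if k = 2 then 1 else 3)" "rtime ?W r = real r + 2" "vport ?W r = {1, 2}"
    for i k r by (simp_all add: lcmb_staler_workload_def)
  have [simp]: "latest ?W 2 = 1"
    by (simp add: latest_def)
  have [simp]: "lastupd ?W k i = (if 0 < i \<and> k \<in> {1, 2} then 1 else 0)" for k i
    by (cases i) (simp_all add: lastupd_def)
  have "{i \<in> {0..1}. no_uc ?W i (nodes ?W) 2} = {0}"
    by (auto simp: no_uc_def computed_def)
  hence [simp]: "committed ?W 2 = 0"
    by (simp add: committed_def)
  have "lcmb_ver ?W 0 = 0"
    by (simp add: lcmb_ver_def lcmb_ver_h_def lcnb_ver_def no_uc_def computed_def)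
  hence LCMB: "stale_results ?W LCMB 0 = {Res 1 0, Res 2 0}"
    by (auto simp: stale_results_def read_ver_def Vset_def state_in_def computed_def)
  have "icnb_state ?W 1 2 = Res 1 0" "icnb_state ?W 2 2 = Res 2 1"
    by (simp_all add: icnb_state_def)
  hence ICNB: "stale_results ?W ICNB 0 = {Res 1 0}"
    by (auto simp: stale_results_def Vset_def state_in_def computed_def)
  have "nr ?W = 2"
    by (simp add: lcmb_staler_workload_def)
  with LCMB ICNB show ?thesis
    by (simp add: staleness_eq_sum_card_stale_results[OF wf_lcmb_staler_workload])
qed

text \<open>The first read sees view 1 of write 1 computed, so LCMB records timestamp 1 for it. At
  the second read write 2 has not computed view 1, and write 1 is still uncommitted because of
  node 2, so the committed graph would violate monotonicity: LCMB reads the latest graph and gets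
  a UC, whereas ICNB returns the now stale result of write 1.\<close>

definition icnb_staler_workload :: workload where
  "icnb_staler_workload = \<lparr>nodes = {0, 1, 2}, edges = {(0, 1), (0, 2)},
     nw = 2, wstart = (\<lambda>i. 2 * real i - 1), upd = (\<lambda>i. if i = 1 then {1, 2} else {1}),
     ctime = (\<lambda>i k. if i = 1 \<and> k = 1 then 1 else 7),
     nr = 3, rtime = (\<lambda>r. 2 * real r + 2), vport = (\<lambda>_. {1})\<rparr>"

lemma wf_icnb_staler_workload: "wf_workload icnb_staler_workload"
proof -
  have "acyclic {(0::nat, 1), (0, 2)}"
    by (rule acyclic_subset[OF wf_acyclic[OF wf_less_than]]) auto
  thus ?thesis
    by (auto simp: wf_workload_def views_def icnb_staler_workload_def)
qed

lemma staleness_LCMB_less_ICNB: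
  "staleness icnb_staler_workload LCMB < staleness icnb_staler_workload ICNB"
proof -
  let ?W = icnb_staler_workload
  have [simp]: "nodes ?W = {0, 1, 2}" "nw ?W = 2" "wstart ?W i = 2 * real i - 1"
    "upd ?W i = (if i = 1 then {1, 2} else {1})"
    "ctime ?W i k = (if i = 1 \<and> k = 1 then 1 else 7)" "rtime ?W r = 2 * real r + 2"
    "vport ?W r = {1}"
    for i k r by (simp_all add: icnb_staler_workload_def)
  have "{i \<in> {1..nw ?W}. wstart ?W i \<le> 2} = {1}" "{i \<in> {1..nw ?W}. wstart ?W i \<le> 4} = {1, 2}"
    by auto
  hence [simp]: "latest ?W 2 = 1" "latest ?W 4 = 2"
    by (simp_all add: latest_def)
  have [simp]:
    "lastupd ?W k i = (if k = 1 then min i 2 else if k = 2 then min i 1 else 0)" for k i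
    unfolding lastupd_def by (rule Max_eqI; auto split: if_splits)+
  have "{i \<in> {0..2}. no_uc ?W i (nodes ?W) 4} = {0}"
    by (auto simp: no_uc_def computed_def)
  hence [simp]: "committed ?W 4 = 0"
    by (simp add: committed_def)
  have reads_latest: "stale_results ?W LCMB r = {}" if "lcmb_ver ?W r = latest ?W (rtime ?W r)" for r
    using that by (intro stale_results_empty_if_reads_latest) (auto simp: read_ver_def Vset_def)
  have lcmb_0: "lcmb_ver ?W 0 = latest ?W (rtime ?W 0)"
    by (simp add: lcmb_ver_def lcmb_ver_h_def lcnb_ver_def no_uc_def computed_def)
  hence LCMB_0: "stale_results ?W LCMB 0 = {}"
    by (rule reads_latest)
  have "lcmb_hist ?W 1 1 = 1"
    using lcmb_0 by (simp add: lcmb_ver_def)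
  hence "lcmb_ver ?W 1 = latest ?W (rtime ?W 1)"
    by (simp add: lcmb_ver_def lcmb_ver_h_def)
  hence LCMB_1: "stale_results ?W LCMB 1 = {}"
    by (rule reads_latest)
  have "icnb_state ?W 1 2 = Res 1 1" "icnb_state ?W 1 4 = Res 1 1"
    by (simp_all add: icnb_state_def)
  hence ICNB: "stale_results ?W ICNB 0 = {}" "stale_results ?W ICNB 1 = {Res 1 1}"
    by (auto simp: stale_results_def Vset_def state_in_def computed_def)
  have "nr ?W = 3" and "{..<2::nat} = {0, 1}"
    by (auto simp: icnb_staler_workload_def)
  with LCMB_0 LCMB_1 ICNB show ?thesis
    by (simp add: staleness_eq_sum_card_stale_results[OF wf_icnb_staler_workload])
qed

theorem theorem2p9:
  shows "(\<forall>w. wf_workload w \<longrightarrow> staleness w LCMB \<le> staleness w LCNB)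
       \<and> (\<forall>w. wf_workload w \<longrightarrow> staleness w ICNB \<le> staleness w LCNB)
       \<and> \<not> (\<forall>w. wf_workload w \<longrightarrow> staleness w LCMB \<le> staleness w ICNB)
       \<and> \<not> (\<forall>w. wf_workload w \<longrightarrow> staleness w ICNB \<le> staleness w LCMB)"
proof (intro conjI allI impI notI)
  fix w assume wf: "wf_workload w"
  show "staleness w LCMB \<le> staleness w LCNB"
    by (rule staleness_mono[OF wf card_stale_results_LCMB_le_LCNB[OF wf]])
next
  fix w assume wf: "wf_workload w"
  show "staleness w ICNB \<le> staleness w LCNB"
    by (rule staleness_mono[OF wf card_stale_results_ICNB_le_LCNB[OF wf]])
next
  assume "\<forall>w. wf_workload w \<longrightarrow> staleness w LCMB \<le> staleness w ICNB"
  thus False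
    using wf_lcmb_staler_workload staleness_ICNB_less_LCMB by fastforce
next
  assume "\<forall>w. wf_workload w \<longrightarrow> staleness w ICNB \<le> staleness w LCMB"
  thus False
    using wf_icnb_staler_workload staleness_LCMB_less_ICNB by fastforce
qed

end
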